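(* Let $n$ be a positive integer, let $a_n$ be an integer, and let $x$ be a nonzero real or complex number. Then \[ \left(\frac{x-1}{x}\right)^n\sum_{a_{n-1}=1}^{a_n}\sum_{a_{n-2}=1}^{a_{n-1}}\cdots\sum_{a_0=1}^{a_1}x^{a_0} = x^{a_n}-\sum_{j=0}^{n-1}\left(\frac{x-1}{x}\right)^j\binom{a_n+j-1}{j}. \]
   Context: For integers $c,m$ and a function $f$ on the integers, $\sum_{k=c}^m f(k)$ denotes the usual sum if $m\ge c$, equals $0$ if $m=c-1$, and equals $-\sum_{k=m+1}^{c-1}f(k)$ if $m\le c-2$. The nested sum $\sum_{a_{n-1}=c}^{a_n}\sum_{a_{n-2}=c}^{a_{n-1}}\cdots\sum_{a_0=c}^{a_1}g(a_0)$ is the iterated sum ($n$ summation signs): innermost over $a_0$ from $c$ to $a_1$, then over $a_1$ from $c$ to $a_2$, ..., outermost over $a_{n-1}$ from $c$ to $a_n$. For an integer $j\ge0$ and any number $y$, $\binom{y}{j}=y(y-1)\cdots(y-j+1)/j!$. *)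

theory Defs
  imports Complex_Main
begin

definition isum :: "int \<Rightarrow> int \<Rightarrow> (int \<Rightarrow> 'a::ab_group_add) \<Rightarrow> 'a" where
  "isum c m f = (if m \<ge> c then (\<Sum>k\<in>{c..m}. f k)
                 else if m = c - 1 then 0
                 else - (\<Sum>k\<in>{m+1..c-1}. f k))"

text \<open>Iterated sum with n summation signs: nested_sum c n g a_n =
  sum over a_{n-1} from c to a_n ... sum over a_0 from c to a_1 of g a_0.\<close>
fun nested_sum :: "int \<Rightarrow> nat \<Rightarrow> (int \<Rightarrow> 'a::ab_group_add) \<Rightarrow> int \<Rightarrow> 'a" where
  "nested_sum c 0 g a = g a"
| "nested_sum c (Suc k) g a = isum c a (\<lambda>b. nested_sum c k g b)"

end

theory Submission
  imports Defs
begin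

text \<open>Write y = (x - 1)/x and W n a for the sum on the right-hand side. Since
  x^a - x^(a-1) = y x^a and, by Pascal's rule, W (n+1) a - W (n+1) (a-1) = y W n a, the function
  a \<mapsto> x^a - W (n+1) a is a discrete antiderivative of a \<mapsto> y (x^a - W n a) vanishing at a = 0.
  The signed-sum convention makes telescoping valid for every integer upper limit, so induction
  on n gives the identity for all a; it holds for n = 0 as well.\<close>

lemma sum_atLeastAtMost_int_telescope:
  fixes G :: "int \<Rightarrow> 'a::ab_group_add"
  assumes "\<And>k. G k - G (k - 1) = f k" and "m \<ge> c - 1"
  shows "(\<Sum>k\<in>{c..m}. f k) = G m - G (c - 1)"
  using assms(2)
proof (induction m rule: int_ge_induct)
  case base
  then show ?case by simp
next
  case (step m)
  have "{c..m + 1} = insert (m + 1) {c..m}" using step.hyps by auto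
  then have "(\<Sum>k\<in>{c..m + 1}. f k) = f (m + 1) + (\<Sum>k\<in>{c..m}. f k)" by simp
  then show ?case using step.IH assms(1)[of "m + 1"] by (simp add: algebra_simps)
qed

lemma isum_telescope:
  fixes G :: "int \<Rightarrow> 'a::ab_group_add"
  assumes diff: "\<And>k. G k - G (k - 1) = f k"
  shows "isum c m f = G m - G (c - 1)"
proof -
  consider "m \<ge> c" | "m = c - 1" | "m < c - 1" by linarith
  then show ?thesis
  proof cases
    case 1
    then show ?thesis
      unfolding isum_def using sum_atLeastAtMost_int_telescope[of G f, OF diff, of c m] by simp
  next
    case 2
    then show ?thesis unfolding isum_def by simp
  next
    case 3
    then show ?thesis
      unfolding isum_def using sum_atLeastAtMost_int_telescope[of G f, OF diff, of "m + 1" "c - 1"] by simp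
  qed
qed

lemma isum_mult_left:
  fixes r :: "'a::ring"
  shows "isum c m (\<lambda>k. r * f k) = r * isum c m f"
  unfolding isum_def by (simp add: sum_distrib_left)

lemma power_int_diff_pred:
  fixes x :: "'a::field"
  assumes "x \<noteq> 0"
  shows "x powi k - x powi (k - 1) = (x - 1) / x * x powi k"
proof -
  have "x powi k = x powi (k - 1) * x"
    using power_int_add_1[of x "k - 1"] assms by simp
  then show ?thesis using assms by (simp add: field_simps)
qed

definition weighted_gbinomial_sum :: "'a::field_char_0 \<Rightarrow> nat \<Rightarrow> int \<Rightarrow> 'a" where
  "weighted_gbinomial_sum y n a = (\<Sum>j<n. y ^ j * (of_int (a + int j - 1) gchoose j))"

lemma weighted_gbinomial_sum_diff:
  "weighted_gbinomial_sum y (Suc n) a - weighted_gbinomial_sum y (Suc n) (a - 1)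
     = y * weighted_gbinomial_sum y n a"
proof -
  have pascal: "(of_int (a + int (Suc j) - 1) gchoose Suc j)
      - (of_int (a - 1 + int (Suc j) - 1) gchoose Suc j)
      = (of_int (a + int j - 1) gchoose j :: 'a)" for j
    using gbinomial_Suc_Suc[of "of_int (a + int j - 1) :: 'a" j]
    by (simp add: algebra_simps)
  have "weighted_gbinomial_sum y (Suc n) a - weighted_gbinomial_sum y (Suc n) (a - 1)
      = (\<Sum>j<Suc n. y ^ j * ((of_int (a + int j - 1) gchoose j)
                             - (of_int (a - 1 + int j - 1) gchoose j)))"
    unfolding weighted_gbinomial_sum_def by (simp add: sum_subtractf algebra_simps)
  also have "\<dots> = (\<Sum>j<n. y ^ Suc j * ((of_int (a + int (Suc j) - 1) gchoose Suc j)
                             - (of_int (a - 1 + int (Suc j) - 1) gchoose Suc j)))"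
    by (subst sum.lessThan_Suc_shift) simp
  also have "\<dots> = y * weighted_gbinomial_sum y n a"
    unfolding pascal weighted_gbinomial_sum_def by (simp add: sum_distrib_left mult.assoc)
  finally show ?thesis .
qed

lemma weighted_gbinomial_sum_at_zero: "weighted_gbinomial_sum y (Suc n) 0 = 1"
proof -
  have "(of_int (int (Suc j) - 1) gchoose Suc j :: 'a) = 0" for j
    by (simp add: binomial_gbinomial[symmetric])
  then show ?thesis
    unfolding weighted_gbinomial_sum_def by (subst sum.lessThan_Suc_shift) simp
qed

lemma nested_sum_powi:
  fixes x :: "'a::field_char_0"
  assumes "x \<noteq> 0"
  shows "((x - 1) / x) ^ n * nested_sum 1 n (\<lambda>a0. x powi a0) a
         = x powi a - weighted_gbinomial_sum ((x - 1) / x) n a"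
proof (induction n arbitrary: a)
  case 0
  then show ?case by (simp add: weighted_gbinomial_sum_def)
next
  case (Suc n)
  define y where "y = (x - 1) / x"
  define W where "W = weighted_gbinomial_sum y"
  define G where "G k = x powi k - W (Suc n) k" for k
  have antiderivative: "G k - G (k - 1) = y * (x powi k - W n k)" for k
    unfolding G_def using power_int_diff_pred[OF assms, of k] weighted_gbinomial_sum_diff[of y n k]
    unfolding y_def W_def by (simp add: algebra_simps)
  have "y ^ Suc n * nested_sum 1 (Suc n) (\<lambda>a0. x powi a0) a
      = y * isum 1 a (\<lambda>b. y ^ n * nested_sum 1 n (\<lambda>a0. x powi a0) b)"
    by (simp add: isum_mult_left mult.assoc)
  also have "\<dots> = isum 1 a (\<lambda>b. y * (x powi b - W n b))"
    unfolding Suc.IH y_def W_def isum_mult_left ..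
  also have "\<dots> = x powi a - W (Suc n) a"
    using isum_telescope[of G, OF antiderivative, of 1 a] weighted_gbinomial_sum_at_zero
    unfolding G_def W_def by simp
  finally show ?case unfolding y_def W_def .
qed

theorem lemma2:
  fixes n :: nat and an :: int and x :: "'a::real_normed_field"
  assumes "n \<ge> 1" and "x \<noteq> 0"
  shows "((x - 1) / x) ^ n * nested_sum 1 n (\<lambda>a0. x powi a0) an
         = x powi an - (\<Sum>j<n. ((x - 1) / x) ^ j * ((of_int (an + int j - 1) :: 'a) gchoose j))"
  using nested_sum_powi[OF assms(2)] unfolding weighted_gbinomial_sum_def .

end
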